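(* Let $X=(V,E,T)$ be an $(s,k,K)$-two layer system and let $C\subseteq\mathbb{F}_p^V$ be a linear code modelled over $X$ with constraint set $\mathcal{E}$ ($p$ a prime power). For every $v_0\in V$ and every $\underline{c}\in\mathbb{F}_p^V$ there is $\underline{c}'\in\mathbb{F}_p^V$ with $\underline{c}'(v)=\underline{c}(v)$ for all $v\ne v_0$ and $$\frac{m_{v_0}(\{\operatorname{supp}(\underline{e}):\underline{e}\in\mathcal{E},\ \operatorname{supp}(\underline{e})\in E_{v_0},\ \underline{e}\cdot\underline{c}'\neq0\})}{m_{v_0}(E_{v_0})}\le\frac{p-1}{p}.$$
   Context: Let $s,k,K$ be positive integers. An $(s,k,K)$-two layer system is a triple $X=(V,E,T)$ where: $V$ is a finite set; $E\subseteq 2^V$ with $|\tau|=k$ for all $\tau\in E$ and $\bigcup_{\tau\in E}\tau=V$; $T\subseteq 2^E$ with $|\sigma|=K$ for all $\sigma\in T$ and $\bigcup_{\sigma\in T}\sigma=E$. Write $v\in\sigma$ if $v\in\tau$ for some $\tau\in\sigma$; it is required that $2\le|\{\tau\in\sigma:v\in\tau\}|\le s$ for all $\sigma\in T$, $v\in\sigma$. A positive $w:T\to\mathbb{R}_{>0}$ is fixed and extended by $w(\tau)=\sum_{\sigma\ni\tau}w(\sigma)$ for $\tau\in E$. For $v\in V$, $E_v=\{\tau\in E:v\in\tau\}$; the link of $v$ is the graph on $E_v$ where distinct $\tau_1,\tau_2$ are adjacent iff some $\sigma\in T$ contains both, with weight $m_v(\{\tau_1,\tau_2\})=\sum_{\sigma\in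 T,\tau_1,\tau_2\in\sigma}w(\sigma)$; $m_v(\tau)$ is the sum of weights of link edges at $\tau$, and $m_v(B)=\sum_{\tau\in B}m_v(\tau)$ for $B\subseteq E_v$. Codes: $\mathbb{F}_p$ is the field with $p$ elements; $\underline{e}\cdot\underline{c}=\sum_v\underline{e}(v)\underline{c}(v)$, $\operatorname{supp}(\underline{e})=\{v:\underline{e}(v)\neq0\}$. A linear code $C\subseteq\mathbb{F}_p^V$ is modelled over $X$ if there is $\mathcal{E}\subseteq\mathbb{F}_p^V$ with $C=\{\underline{c}:\underline{e}\cdot\underline{c}=0\ \forall\underline{e}\in\mathcal{E}\}$ such that $\underline{e}\mapsto\operatorname{supp}(\underline{e})$ is a bijection $\mathcal{E}\to E$, and a set $\mathcal{T}$ of linear dependencies (functions $\operatorname{ld}:\mathcal{E}\to\mathbb{F}_p$ with $\sum_{\underline{e}}\operatorname{ld}(\underline{e})(\underline{e}\cdot\underline{c})=0$ for all $\underline{c}$) with $T=\{\{\operatorname{supp}(\underline{e}):\operatorname{ld}(\underline{e})\ne0\}:\operatorname{ld}\in\mathcal{T}\}$. *)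

theory Defs
  imports Complex_Main
begin

definition two_layer_system ::
  "nat \<Rightarrow> nat \<Rightarrow> nat \<Rightarrow> 'v set \<Rightarrow> 'v set set \<Rightarrow> 'v set set set \<Rightarrow> bool" where
  "two_layer_system s k K V E T \<longleftrightarrow>
     0 < s \<and> 0 < k \<and> 0 < K \<and> finite V \<and>
     E \<subseteq> Pow V \<and> (\<forall>\<tau>\<in>E. card \<tau> = k) \<and> \<Union>E = V \<and>
     T \<subseteq> Pow E \<and> (\<forall>\<sigma>\<in>T. card \<sigma> = K) \<and> \<Union>T = E \<and>
     (\<forall>\<sigma>\<in>T. \<forall>v. v \<in> \<Union>\<sigma> \<longrightarrow>
        2 \<le> card {\<tau>\<in>\<sigma>. v \<in> \<tau>} \<and> card {\<tau>\<in>\<sigma>. v \<in> \<tau>} \<le> s)"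

definition E_at :: "'v set set \<Rightarrow> 'v \<Rightarrow> 'v set set" where
  "E_at E v = {\<tau>\<in>E. v \<in> \<tau>}"

definition link_adj :: "'v set set \<Rightarrow> 'v set set set \<Rightarrow> 'v \<Rightarrow> 'v set \<Rightarrow> 'v set \<Rightarrow> bool" where
  "link_adj E T v \<tau>1 \<tau>2 \<longleftrightarrow> \<tau>1 \<in> E_at E v \<and> \<tau>2 \<in> E_at E v \<and> \<tau>1 \<noteq> \<tau>2 \<and>
     (\<exists>\<sigma>\<in>T. \<tau>1 \<in> \<sigma> \<and> \<tau>2 \<in> \<sigma>)"

definition m_edge :: "'v set set set \<Rightarrow> ('v set set \<Rightarrow> real) \<Rightarrow> 'v set \<Rightarrow> 'v set \<Rightarrow> real" where
  "m_edge T w \<tau>1 \<tau>2 = (\<Sum>\<sigma>\<in>{\<sigma>\<in>T. \<tau>1 \<in> \<sigma> \<and> \<tau>2 \<in> \<sigma>}. w \<sigma>)"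

definition m_vert :: "'v set set \<Rightarrow> 'v set set set \<Rightarrow> ('v set set \<Rightarrow> real) \<Rightarrow> 'v \<Rightarrow> 'v set \<Rightarrow> real" where
  "m_vert E T w v \<tau> = (\<Sum>\<tau>'\<in>{\<tau>'. link_adj E T v \<tau> \<tau>'}. m_edge T w \<tau> \<tau>')"

definition m_set :: "'v set set \<Rightarrow> 'v set set set \<Rightarrow> ('v set set \<Rightarrow> real) \<Rightarrow> 'v \<Rightarrow> 'v set set \<Rightarrow> real" where
  "m_set E T w v B = (\<Sum>\<tau>\<in>B. m_vert E T w v \<tau>)"

definition vecs :: "'v set \<Rightarrow> ('v \<Rightarrow> 'a::zero) set" where
  "vecs V = {c. \<forall>v. v \<notin> V \<longrightarrow> c v = 0}"

definition dotp :: "'v set \<Rightarrow> ('v \<Rightarrow> 'a::comm_ring) \<Rightarrow> ('v \<Rightarrow> 'a) \<Rightarrow> 'a" where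
  "dotp V e c = (\<Sum>v\<in>V. e v * c v)"

definition supp :: "('v \<Rightarrow> 'a::zero) \<Rightarrow> 'v set" where
  "supp e = {v. e v \<noteq> 0}"

definition is_lin_dep :: "'v set \<Rightarrow> ('v \<Rightarrow> 'a::comm_ring) set \<Rightarrow> (('v \<Rightarrow> 'a) \<Rightarrow> 'a) \<Rightarrow> bool" where
  "is_lin_dep V \<E> ld \<longleftrightarrow> (\<forall>c\<in>vecs V. (\<Sum>e\<in>\<E>. ld e * dotp V e c) = 0)"

definition modelled_over ::
  "'v set \<Rightarrow> 'v set set \<Rightarrow> 'v set set set \<Rightarrow> ('v \<Rightarrow> 'a::field) set \<Rightarrow>
   ('v \<Rightarrow> 'a) set \<Rightarrow> (('v \<Rightarrow> 'a) \<Rightarrow> 'a) set \<Rightarrow> bool" where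
  "modelled_over V E T C \<E> \<T> \<longleftrightarrow>
     \<E> \<subseteq> vecs V \<and>
     C = {c \<in> vecs V. \<forall>e\<in>\<E>. dotp V e c = 0} \<and>
     bij_betw supp \<E> E \<and>
     (\<forall>ld\<in>\<T>. is_lin_dep V \<E> ld) \<and>
     T = (\<lambda>ld. {supp e | e. e \<in> \<E> \<and> ld e \<noteq> 0}) ` \<T>"

end

theory Submission
  imports Defs
begin

text \<open>Let \<open>c'\<close> range over the \<open>q\<close> vectors that agree with \<open>c\<close> off \<open>v\<^sub>0\<close>. A constraint
  \<open>e\<close> whose support contains \<open>v\<^sub>0\<close> has \<open>e(v\<^sub>0) \<noteq> 0\<close>, so \<open>e \<cdot> c'\<close> is an affine function of
  \<open>c'(v\<^sub>0)\<close> with nonzero slope and vanishes for exactly one of the \<open>q\<close> choices. Averaging the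
  \<open>m\<^sub>v\<^sub>0\<close>-weight of the violated constraints over all choices therefore gives exactly
  \<open>(q - 1)/q\<close> times the total weight, and some choice does at least as well as the average.\<close>

lemma dotp_fun_upd:
  assumes "finite V" "v \<in> V"
  shows "dotp V e (c(v := x)) = e v * x + dotp (V - {v}) e c"
proof -
  have "dotp V e (c(v := x)) = e v * x + dotp (V - {v}) e (c(v := x))"
    using assms by (simp add: dotp_def sum.remove)
  also have "dotp (V - {v}) e (c(v := x)) = dotp (V - {v}) e c"
    unfolding dotp_def by (rule sum.cong) auto
  finally show ?thesis .
qed

lemma card_affine_nonzero:
  fixes a r :: "'a::{field,finite}"
  assumes "a \<noteq> 0"
  shows "card {x. a * x + r \<noteq> 0} = card (UNIV :: 'a set) - 1"
proof -
  have "{x. a * x + r \<noteq> 0} = UNIV - {- r / a}"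
    using assms by (auto simp: field_simps eq_neg_iff_add_eq_0 add.commute)
  then show ?thesis by (simp add: card_Diff_singleton)
qed

lemma exists_le_average:
  fixes f :: "'a \<Rightarrow> 'b::linordered_idom"
  assumes "finite A" "A \<noteq> {}"
  shows "\<exists>x\<in>A. of_nat (card A) * f x \<le> sum f A"
proof -
  have "Min (f ` A) \<in> f ` A"
    using assms by simp
  moreover have "of_nat (card A) * Min (f ` A) \<le> sum f A"
    using assms by (intro sum_bounded_below) simp
  ultimately show ?thesis by auto
qed

lemma exists_weighted_fraction_le:
  fixes m :: "'b \<Rightarrow> real"
  assumes "finite A" "A \<noteq> {}" "finite B"
    and nonneg: "\<And>b. b \<in> B \<Longrightarrow> 0 \<le> m b"
    and few: "\<And>b. b \<in> B \<Longrightarrow> card {x\<in>A. P b x} \<le> N"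
  shows "\<exists>x\<in>A. sum m {b\<in>B. P b x} / sum m B \<le> real N / real (card A)"
proof -
  have "(\<Sum>x\<in>A. sum m {b\<in>B. P b x}) = (\<Sum>b\<in>B. \<Sum>x\<in>A. if P b x then m b else 0)"
    using assms(3) by (simp add: sum.inter_filter sum.swap[of _ B])
  also have "\<dots> = (\<Sum>b\<in>B. m b * real (card {x\<in>A. P b x}))"
    using assms(1) by (simp add: sum.If_cases Int_def conj_commute mult.commute)
  also have "\<dots> \<le> (\<Sum>b\<in>B. m b * real N)"
    using nonneg few by (intro sum_mono mult_left_mono) auto
  also have "\<dots> = real N * sum m B"
    by (simp add: sum_distrib_left mult.commute)
  finally obtain x where "x \<in> A" and x: "real (card A) * sum m {b\<in>B. P b x} \<le> real N * sum m B"
    using exists_le_average[OF assms(1,2), of "\<lambda>x. sum m {b\<in>B. P b x}"] by force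
  have "0 \<le> sum m B"
    using nonneg by (simp add: sum_nonneg)
  moreover have "0 < real (card A)"
    using assms(1,2) by (simp add: card_gt_0_iff)
  ultimately have "sum m {b\<in>B. P b x} / sum m B \<le> real N / real (card A)"
    using x by (cases "sum m B = 0") (auto simp: divide_simps mult.commute)
  with \<open>x \<in> A\<close> show ?thesis ..
qed

lemma m_vert_nonneg:
  assumes "\<forall>\<sigma>\<in>T. w \<sigma> > 0"
  shows "0 \<le> m_vert E T w v \<tau>"
  unfolding m_vert_def m_edge_def
  using assms by (intro sum_nonneg) (auto intro: less_imp_le)

lemma m_set_supp_image:
  "inj_on supp S \<Longrightarrow> m_set E T w v (supp ` S) = (\<Sum>e\<in>S. m_vert E T w v (supp e))"
  by (simp add: m_set_def sum.reindex)

lemma finite_constraints: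
  assumes "two_layer_system s k K V E T" "modelled_over V E T C \<E> \<T>"
  shows "finite \<E>"
proof -
  have "finite E"
    using assms(1) unfolding two_layer_system_def by (meson finite_Pow_iff finite_subset)
  then show ?thesis
    using assms(2) unfolding modelled_over_def bij_betw_def by (metis finite_imageD)
qed

lemma card_violating_values:
  fixes e c :: "'v \<Rightarrow> 'a::{field,finite}"
  assumes "finite V" "v \<in> V" "e v \<noteq> 0"
  shows "card {x. dotp V e (c(v := x)) \<noteq> 0} = card (UNIV :: 'a set) - 1"
  using card_affine_nonzero[OF assms(3), of "dotp (V - {v}) e c"]
  by (simp add: dotp_fun_upd[OF assms(1,2)])

theorem lemma3p6:
  fixes s k K :: nat
    and V :: "'v set" and E :: "'v set set" and T :: "'v set set set"
    and w :: "'v set set \<Rightarrow> real"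
    and C :: "('v \<Rightarrow> 'a::{field,finite}) set"
    and \<E> :: "('v \<Rightarrow> 'a) set" and \<T> :: "(('v \<Rightarrow> 'a) \<Rightarrow> 'a) set"
    and v0 :: 'v and c :: "'v \<Rightarrow> 'a"
  assumes "two_layer_system s k K V E T"
    and "\<forall>\<sigma>\<in>T. w \<sigma> > 0"
    and "modelled_over V E T C \<E> \<T>"
    and "v0 \<in> V"
    and "c \<in> vecs V"
  shows "\<exists>c'\<in>vecs V. (\<forall>v. v \<noteq> v0 \<longrightarrow> c' v = c v) \<and>
           m_set E T w v0 {supp e | e. e \<in> \<E> \<and> supp e \<in> E_at E v0 \<and> dotp V e c' \<noteq> 0}
             / m_set E T w v0 (E_at E v0)
           \<le> (real (card (UNIV :: 'a set)) - 1) / real (card (UNIV :: 'a set))"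
proof -
  have "finite V"
    using assms(1) by (simp add: two_layer_system_def)
  have inj: "inj_on supp \<E>" and img: "supp ` \<E> = E"
    using assms(3) by (auto simp: modelled_over_def bij_betw_def)
  define B where "B = {e\<in>\<E>. v0 \<in> supp e}"
  have "finite B"
    using finite_constraints[OF assms(1,3)] by (simp add: B_def)
  have "E_at E v0 = supp ` B"
    and violated: "{supp e | e. e \<in> \<E> \<and> supp e \<in> E_at E v0 \<and> dotp V e c' \<noteq> 0}
      = supp ` {e\<in>B. dotp V e c' \<noteq> 0}" for c'
    using img by (auto simp: E_at_def B_def)
  have few: "card {x\<in>UNIV. dotp V e (c(v0 := x)) \<noteq> 0} \<le> card (UNIV :: 'a set) - 1"
    if "e \<in> B" for e
    using card_violating_values[OF \<open>finite V\<close> assms(4), of e c] that by (simp add: B_def supp_def)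
  obtain x where
    "(\<Sum>e\<in>{e\<in>B. dotp V e (c(v0 := x)) \<noteq> 0}. m_vert E T w v0 (supp e))
       / (\<Sum>e\<in>B. m_vert E T w v0 (supp e))
     \<le> real (card (UNIV :: 'a set) - 1) / real (card (UNIV :: 'a set))"
    using exists_weighted_fraction_le[of UNIV B "\<lambda>e. m_vert E T w v0 (supp e)"
        "\<lambda>e x. dotp V e (c(v0 := x)) \<noteq> 0" "card (UNIV :: 'a set) - 1"]
      \<open>finite B\<close> m_vert_nonneg[OF assms(2)] few
    by auto
  moreover have "real (card (UNIV :: 'a set) - 1) = real (card (UNIV :: 'a set)) - 1"
    by (simp add: of_nat_diff Suc_leI finite_UNIV_card_ge_0)
  moreover have "c(v0 := x) \<in> vecs V"
    using assms(4,5) by (simp add: vecs_def)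
  moreover have "inj_on supp B" "inj_on supp {e\<in>B. dotp V e (c(v0 := x)) \<noteq> 0}"
    using inj by (auto simp: B_def intro: inj_on_subset)
  ultimately show ?thesis
    unfolding violated unfolding \<open>E_at E v0 = supp ` B\<close>
    by (intro bexI[of _ "c(v0 := x)"]) (auto simp: m_set_supp_image)
qed

end
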